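(* Every connected extended representation graph for $E$ that contains a source is isomorphic to $(F_v,\phi_v)$ for some $v\in E^0$.
   Context: $E=(E^0,E^1,s,r)$ is a row-finite directed graph; for each vertex $v$ emitting an edge a fixed edge $e^v\in s^{-1}(v)$ is called special, others nonspecial. The double graph $E_d$ has vertices $E^0$ and edges $e$ (real) and $e^*$ (ghost) for $e\in E^1$, with $s_d(e)=s(e),r_d(e)=r(e),s_d(e^* )=r(e),r_d(e^* )=s(e)$. Paths of length $0$ are vertices. For a path $p=e_1\dots e_n$ set $p^*=e_n^*\dots e_1^*$. The set $X$ of basis paths consists of the paths in $E_d$: vertices; $p,p^*$ for paths $p$ of length $\ge1$ in $E$; $pq^*$ with $p=e_1\dots e_k,q=f_1\dots f_n$ of length $\ge1$ in $E$, $r(p)=r(q)$, and $e_k\ne f_n$ or $e_k=f_n$ nonspecial. $X_v=\{x\in X: s_d(x)=v\}$. An extended representation graph for $E$ is a pair $(F,\phi)$, $F$ a directed graph, $\phi:F\to E_d$ a graph homomorphism, such that for every $w\in F^0$: (i) $w$ is a source (receives no edge) or receives exactly one edge $f_w$; (ii) if $w$ is a source or $\phi(f_w)$ is a nonspecial real edge, $\phi$ maps $s^{-1}(w)$ bijectively onto $s_d^{-1}(\phi(w))$; (iii) if $\phi(f_w)$ is a special real edge, onto $s_d^{-1}(\phi(w))\setminus\{\phi(f_w)^*\}$; (iv) if $\phi(f_w)$ is a ghost edge, onto the ghost edges in $s_d^{-1}(\phi(w))$. An isomorphism $(F,\phi)\to(G,\psi)$ is a graph isomorphism $\alpha$ with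 $\psi\circ\alpha=\phi$. $F$ is connected if any two vertices are joined by a path when edge directions are ignored. $(F_v,\phi_v)$ for $v\in E^0$: vertices $w_x$ ($x\in X_v$), edges $f_x$ ($x\in X_v\setminus\{v\}$) from $w_{x'}$ to $w_x$ where $x'$ is $x$ with its last edge removed ($x'=v$ if $|x|=1$); $\phi_v(w_x)=r_d(x)$, $\phi_v(f_x)=$ last edge of $x$. *)

theory Defs
  imports Main
begin

text \<open>The special edges are given by a choice function sp: for every vertex v
that emits an edge, sp v is the special edge emitted by v. An edge e is special iff
e = sp (s e).\<close>

definition dgraph :: "'v set \<Rightarrow> 'e set \<Rightarrow> ('e \<Rightarrow> 'v) \<Rightarrow> ('e \<Rightarrow> 'v) \<Rightarrow> bool" where
  "dgraph V Ed src rng \<longleftrightarrow> (\<forall>e\<in>Ed. src e \<in> V \<and> rng e \<in> V)"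

definition row_finite :: "'v set \<Rightarrow> 'e set \<Rightarrow> ('e \<Rightarrow> 'v) \<Rightarrow> bool" where
  "row_finite V Ed src \<longleftrightarrow> (\<forall>v\<in>V. finite {e\<in>Ed. src e = v})"

definition special_choice :: "'v set \<Rightarrow> 'e set \<Rightarrow> ('e \<Rightarrow> 'v) \<Rightarrow> ('v \<Rightarrow> 'e) \<Rightarrow> bool" where
  "special_choice V Ed src sp \<longleftrightarrow>
     (\<forall>v\<in>V. (\<exists>e\<in>Ed. src e = v) \<longrightarrow> sp v \<in> Ed \<and> src (sp v) = v)"

text \<open>Edges of the double graph: real edges e and ghost edges e*.\<close>
datatype 'e dedge = Re 'e | Gh 'e

definition dedges :: "'e set \<Rightarrow> 'e dedge set" where
  "dedges E1 = Re ` E1 \<union> Gh ` E1"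

fun sd :: "('e \<Rightarrow> 'v) \<Rightarrow> ('e \<Rightarrow> 'v) \<Rightarrow> 'e dedge \<Rightarrow> 'v" where
  "sd s r (Re e) = s e"
| "sd s r (Gh e) = r e"

fun rd :: "('e \<Rightarrow> 'v) \<Rightarrow> ('e \<Rightarrow> 'v) \<Rightarrow> 'e dedge \<Rightarrow> 'v" where
  "rd s r (Re e) = r e"
| "rd s r (Gh e) = s e"

fun is_ghost :: "'e dedge \<Rightarrow> bool" where
  "is_ghost (Re e) = False"
| "is_ghost (Gh e) = True"

definition epath :: "'e set \<Rightarrow> ('e \<Rightarrow> 'v) \<Rightarrow> ('e \<Rightarrow> 'v) \<Rightarrow> 'e list \<Rightarrow> bool" where
  "epath E1 s r p \<longleftrightarrow> p \<noteq> [] \<and> set p \<subseteq> E1 \<and>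
     (\<forall>i. Suc i < length p \<longrightarrow> r (p ! i) = s (p ! Suc i))"

text \<open>Nonempty basis paths x with s_d(x) = v, as lists of edges of E_d:
  p, p* and p q* (with the stated condition on the last edges).\<close>
definition basis_path ::
  "'e set \<Rightarrow> ('e \<Rightarrow> 'v) \<Rightarrow> ('e \<Rightarrow> 'v) \<Rightarrow> ('v \<Rightarrow> 'e) \<Rightarrow> 'v \<Rightarrow> 'e dedge list \<Rightarrow> bool" where
  "basis_path E1 s r sp v x \<longleftrightarrow>
     (\<exists>p. epath E1 s r p \<and> s (hd p) = v \<and> x = map Re p)
   \<or> (\<exists>q. epath E1 s r q \<and> r (last q) = v \<and> x = map Gh (rev q))
   \<or> (\<exists>p q. epath E1 s r p \<and> epath E1 s r q \<and> s (hd p) = v \<and> r (last p) = r (last q)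
        \<and> (last p \<noteq> last q \<or> last p \<noteq> sp (s (last p)))
        \<and> x = map Re p @ map Gh (rev q))"

text \<open>X_v: the vertex v is represented by the empty list.\<close>
definition Xv ::
  "'e set \<Rightarrow> ('e \<Rightarrow> 'v) \<Rightarrow> ('e \<Rightarrow> 'v) \<Rightarrow> ('v \<Rightarrow> 'e) \<Rightarrow> 'v \<Rightarrow> 'e dedge list set" where
  "Xv E1 s r sp v = {[]} \<union> {x. basis_path E1 s r sp v x}"

text \<open>The representation graph (F_v, phi_v): vertices w_x indexed by x \<in> X_v,
  edges f_x indexed by x \<in> X_v - {v}, f_x goes from w_{butlast x} to w_x.\<close>
definition Fv_V :: "'e set \<Rightarrow> ('e \<Rightarrow> 'v) \<Rightarrow> ('e \<Rightarrow> 'v) \<Rightarrow> ('v \<Rightarrow> 'e) \<Rightarrow> 'v \<Rightarrow> 'e dedge list set" where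
  "Fv_V E1 s r sp v = Xv E1 s r sp v"

definition Fv_E :: "'e set \<Rightarrow> ('e \<Rightarrow> 'v) \<Rightarrow> ('e \<Rightarrow> 'v) \<Rightarrow> ('v \<Rightarrow> 'e) \<Rightarrow> 'v \<Rightarrow> 'e dedge list set" where
  "Fv_E E1 s r sp v = Xv E1 s r sp v - {[]}"

definition Fv_src :: "'e dedge list \<Rightarrow> 'e dedge list" where
  "Fv_src x = butlast x"

definition Fv_rng :: "'e dedge list \<Rightarrow> 'e dedge list" where
  "Fv_rng x = x"

definition Fv_phi0 :: "('e \<Rightarrow> 'v) \<Rightarrow> ('e \<Rightarrow> 'v) \<Rightarrow> 'v \<Rightarrow> 'e dedge list \<Rightarrow> 'v" where
  "Fv_phi0 s r v x = (if x = [] then v else rd s r (last x))"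

definition Fv_phi1 :: "'e dedge list \<Rightarrow> 'e dedge" where
  "Fv_phi1 x = last x"

definition hom_to_double ::
  "'v set \<Rightarrow> 'e set \<Rightarrow> ('e \<Rightarrow> 'v) \<Rightarrow> ('e \<Rightarrow> 'v) \<Rightarrow>
   'w set \<Rightarrow> 'f set \<Rightarrow> ('f \<Rightarrow> 'w) \<Rightarrow> ('f \<Rightarrow> 'w) \<Rightarrow> ('w \<Rightarrow> 'v) \<Rightarrow> ('f \<Rightarrow> 'e dedge) \<Rightarrow> bool" where
  "hom_to_double E0 E1 s r FV FE sF rF phi0 phi1 \<longleftrightarrow>
     (\<forall>w\<in>FV. phi0 w \<in> E0) \<and>
     (\<forall>f\<in>FE. phi1 f \<in> dedges E1 \<and> phi0 (sF f) = sd s r (phi1 f) \<and> phi0 (rF f) = rd s r (phi1 f))"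

definition ext_rep_graph ::
  "'v set \<Rightarrow> 'e set \<Rightarrow> ('e \<Rightarrow> 'v) \<Rightarrow> ('e \<Rightarrow> 'v) \<Rightarrow> ('v \<Rightarrow> 'e) \<Rightarrow>
   'w set \<Rightarrow> 'f set \<Rightarrow> ('f \<Rightarrow> 'w) \<Rightarrow> ('f \<Rightarrow> 'w) \<Rightarrow> ('w \<Rightarrow> 'v) \<Rightarrow> ('f \<Rightarrow> 'e dedge) \<Rightarrow> bool" where
  "ext_rep_graph E0 E1 s r sp FV FE sF rF phi0 phi1 \<longleftrightarrow>
     dgraph FV FE sF rF \<and> hom_to_double E0 E1 s r FV FE sF rF phi0 phi1 \<and>
     (\<forall>w\<in>FV.
        (let out = {f\<in>FE. sF f = w};
             dout = {d\<in>dedges E1. sd s r d = phi0 w} in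
         (\<not> (\<exists>f\<in>FE. rF f = w) \<and> bij_betw phi1 out dout)
       \<or> (\<exists>f\<in>FE. rF f = w \<and> (\<forall>g\<in>FE. rF g = w \<longrightarrow> g = f) \<and>
            (case phi1 f of
               Re e \<Rightarrow> (if e = sp (s e) then bij_betw phi1 out (dout - {Gh e})
                        else bij_betw phi1 out dout)
             | Gh e \<Rightarrow> bij_betw phi1 out {d\<in>dout. is_ghost d}))))"

definition connected_graph :: "'w set \<Rightarrow> 'f set \<Rightarrow> ('f \<Rightarrow> 'w) \<Rightarrow> ('f \<Rightarrow> 'w) \<Rightarrow> bool" where
  "connected_graph FV FE sF rF \<longleftrightarrow>
     (let adj = {(sF f, rF f) | f. f \<in> FE} in
      \<forall>a\<in>FV. \<forall>b\<in>FV. (a, b) \<in> (adj \<union> adj\<inverse>)\<^sup>*)"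

definition has_source :: "'w set \<Rightarrow> 'f set \<Rightarrow> ('f \<Rightarrow> 'w) \<Rightarrow> bool" where
  "has_source FV FE rF \<longleftrightarrow> (\<exists>w\<in>FV. \<not> (\<exists>f\<in>FE. rF f = w))"

definition rep_iso ::
  "'w set \<Rightarrow> 'f set \<Rightarrow> ('f \<Rightarrow> 'w) \<Rightarrow> ('f \<Rightarrow> 'w) \<Rightarrow> ('w \<Rightarrow> 'v) \<Rightarrow> ('f \<Rightarrow> 'd) \<Rightarrow>
   'x set \<Rightarrow> 'y set \<Rightarrow> ('y \<Rightarrow> 'x) \<Rightarrow> ('y \<Rightarrow> 'x) \<Rightarrow> ('x \<Rightarrow> 'v) \<Rightarrow> ('y \<Rightarrow> 'd) \<Rightarrow>
   ('w \<Rightarrow> 'x) \<Rightarrow> ('f \<Rightarrow> 'y) \<Rightarrow> bool" where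
  "rep_iso FV FE sF rF phi0 phi1 GV GE sG rG psi0 psi1 a0 a1 \<longleftrightarrow>
     bij_betw a0 FV GV \<and> bij_betw a1 FE GE \<and>
     (\<forall>f\<in>FE. a0 (sF f) = sG (a1 f) \<and> a0 (rF f) = rG (a1 f)) \<and>
     (\<forall>w\<in>FV. psi0 (a0 w) = phi0 w) \<and> (\<forall>f\<in>FE. psi1 (a1 f) = phi1 f)"

end

theory Submission
  imports Defs
begin

(* Basis paths starting at v are exactly the reduced walks of the double graph from v: walks in
   which no ghost edge is followed by a real edge and no special edge e is followed by e*.
   Reducedness is a condition on consecutive edges, so the one-edge extensions of a basis path x
   depend only on the last edge of x, and they are precisely what conditions (ii)-(iv) prescribe
   for the out-edges of a vertex of an extended representation graph. Hence in a connected
   extended representation graph with a source w0, labelling the directed paths from w0 by their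
   images in the double graph is a bijection onto X_v for v = phi(w0): every vertex receives at
   most one edge, so it ends at most one such path, and it ends at least one by connectedness,
   since stepping backwards along an edge merely deletes the last letter of a label. *)

lemma successively_imp_all:
  assumes "successively (\<lambda>x y. P x \<longrightarrow> P y) (x # xs)" "P x"
  shows "\<forall>y\<in>set xs. P y"
proof -
  have "transp (\<lambda>x y. P x \<longrightarrow> P y)"
    by (rule transpI) blast
  then have "sorted_wrt (\<lambda>x y. P x \<longrightarrow> P y) (x # xs)"
    using assms(1) successively_conv_sorted_wrt by blast
  then show ?thesis
    using assms(2) by simp
qed

lemma Re_in_dedges [simp]: "Re e \<in> dedges E1 \<longleftrightarrow> e \<in> E1"
  and Gh_in_dedges [simp]: "Gh e \<in> dedges E1 \<longleftrightarrow> e \<in> E1"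
  by (auto simp: dedges_def)

lemma epath_iff_successively:
  "epath E1 s r p \<longleftrightarrow> p \<noteq> [] \<and> set p \<subseteq> E1 \<and> successively (\<lambda>e f. r e = s f) p"
  by (simp add: epath_def successively_conv_nth)

lemma epath_nonempty: "epath E1 s r p \<Longrightarrow> p \<noteq> []"
  by (simp add: epath_def)

lemma ex_map_Re_iff: "(\<exists>p. xs = map Re p) \<longleftrightarrow> (\<forall>d\<in>set xs. \<not> is_ghost d)"
proof -
  have Re: "(\<exists>e. d = Re e) \<longleftrightarrow> \<not> is_ghost d" for d :: "'e dedge"
    by (cases d) auto
  show ?thesis
    by (simp only: ex_map_conv Re)
qed

lemma ex_map_Gh_iff: "(\<exists>q. xs = map Gh q) \<longleftrightarrow> (\<forall>d\<in>set xs. is_ghost d)"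
proof -
  have Gh: "(\<exists>e. d = Gh e) \<longleftrightarrow> is_ghost d" for d :: "'e dedge"
    by (cases d) auto
  show ?thesis
    by (simp only: ex_map_conv Gh)
qed

definition normal_pair :: "('e \<Rightarrow> 'v) \<Rightarrow> ('v \<Rightarrow> 'e) \<Rightarrow> 'e dedge \<Rightarrow> 'e dedge \<Rightarrow> bool" where
  "normal_pair s sp d d' \<longleftrightarrow>
     (case d of Re e \<Rightarrow> e = sp (s e) \<longrightarrow> d' \<noteq> Gh e | Gh e \<Rightarrow> is_ghost d')"

definition reduced_walk ::
  "'e set \<Rightarrow> ('e \<Rightarrow> 'v) \<Rightarrow> ('e \<Rightarrow> 'v) \<Rightarrow> ('v \<Rightarrow> 'e) \<Rightarrow> 'v \<Rightarrow> 'e dedge list \<Rightarrow> bool" where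
  "reduced_walk E1 s r sp v x \<longleftrightarrow> set x \<subseteq> dedges E1 \<and> (x \<noteq> [] \<longrightarrow> sd s r (hd x) = v) \<and>
     successively (\<lambda>d d'. rd s r d = sd s r d' \<and> normal_pair s sp d d') x"

lemma reduced_walk_Nil [simp]: "reduced_walk E1 s r sp v []"
  by (simp add: reduced_walk_def)

lemma reduced_walk_map_Re:
  "reduced_walk E1 s r sp v (map Re p) \<longleftrightarrow> p = [] \<or> epath E1 s r p \<and> s (hd p) = v"
  by (auto simp: reduced_walk_def epath_iff_successively successively_map hd_map normal_pair_def)

lemma reduced_walk_map_Gh:
  "reduced_walk E1 s r sp v (map Gh (rev q)) \<longleftrightarrow> q = [] \<or> epath E1 s r q \<and> r (last q) = v"
  by (auto simp: reduced_walk_def epath_iff_successively successively_map hd_map hd_rev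
      normal_pair_def eq_commute[of "s y" "r x" for x y])

lemma reduced_walk_map_Re_Gh:
  assumes "p \<noteq> []" "q \<noteq> []"
  shows "reduced_walk E1 s r sp v (map Re p @ map Gh (rev q)) \<longleftrightarrow>
    epath E1 s r p \<and> s (hd p) = v \<and> epath E1 s r q \<and> r (last p) = r (last q) \<and>
    (last p \<noteq> last q \<or> last p \<noteq> sp (s (last p)))"
  using assms
  by (auto simp: reduced_walk_def epath_iff_successively successively_map successively_append_iff
      hd_map last_map hd_rev normal_pair_def eq_commute[of "s y" "r x" for x y])

lemma reduced_walk_Re_Gh_split:
  assumes "reduced_walk E1 s r sp v x"
  obtains p q where "x = map Re p @ map Gh (rev q)"
proof -
  define ys where "ys = dropWhile (Not \<circ> is_ghost) x"
  have x: "x = takeWhile (Not \<circ> is_ghost) x @ ys"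
    by (simp add: ys_def)
  have "\<forall>d\<in>set ys. is_ghost d"
  proof (cases ys)
    case (Cons d ds)
    have "successively (\<lambda>d d'. rd s r d = sd s r d' \<and> normal_pair s sp d d')
        (takeWhile (Not \<circ> is_ghost) x @ ys)"
      using assms by (simp add: reduced_walk_def ys_def)
    then have "successively (\<lambda>d d'. rd s r d = sd s r d' \<and> normal_pair s sp d d') ys"
      by (simp add: successively_append_iff)
    then have "successively (\<lambda>d d'. is_ghost d \<longrightarrow> is_ghost d') (d # ds)"
      unfolding Cons by (rule successively_mono) (auto simp: normal_pair_def split: dedge.splits)
    moreover have "is_ghost d"
      using Cons hd_dropWhile[of "Not \<circ> is_ghost" x] unfolding ys_def by simp
    ultimately show ?thesis
      using Cons successively_imp_all by (metis set_ConsD)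
  qed simp
  then obtain q where "ys = map Gh q"
    using ex_map_Gh_iff by blast
  moreover obtain p where "takeWhile (Not \<circ> is_ghost) x = map Re p"
    using ex_map_Re_iff set_takeWhileD by (metis comp_apply)
  ultimately show ?thesis
    using that[of p "rev q"] x by simp
qed

lemma Xv_iff_reduced_walk: "x \<in> Xv E1 s r sp v \<longleftrightarrow> reduced_walk E1 s r sp v x"
proof
  assume "x \<in> Xv E1 s r sp v"
  then show "reduced_walk E1 s r sp v x"
    unfolding Xv_def basis_path_def
    by (auto simp: reduced_walk_map_Re reduced_walk_map_Gh reduced_walk_map_Re_Gh epath_nonempty)
next
  assume x: "reduced_walk E1 s r sp v x"
  then obtain p q where pq: "x = map Re p @ map Gh (rev q)"
    by (rule reduced_walk_Re_Gh_split)
  show "x \<in> Xv E1 s r sp v"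
    using x unfolding pq Xv_def basis_path_def
    by (cases "p = []"; cases "q = []")
      (auto simp: reduced_walk_map_Re reduced_walk_map_Gh reduced_walk_map_Re_Gh)
qed

definition admissible_edges ::
  "'e set \<Rightarrow> ('e \<Rightarrow> 'v) \<Rightarrow> ('e \<Rightarrow> 'v) \<Rightarrow> ('v \<Rightarrow> 'e) \<Rightarrow> 'v \<Rightarrow> 'e dedge list \<Rightarrow> 'e dedge set" where
  "admissible_edges E1 s r sp v x =
     {d \<in> dedges E1. sd s r d = Fv_phi0 s r v x \<and> (x \<noteq> [] \<longrightarrow> normal_pair s sp (last x) d)}"

lemma Xv_snoc_iff:
  "x @ [d] \<in> Xv E1 s r sp v \<longleftrightarrow> x \<in> Xv E1 s r sp v \<and> d \<in> admissible_edges E1 s r sp v x"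
  by (cases "x = []")
    (auto simp: Xv_iff_reduced_walk reduced_walk_def admissible_edges_def Fv_phi0_def
      successively_append_iff)

lemma ext_rep_graph_in_edge_unique:
  assumes "ext_rep_graph E0 E1 s r sp FV FE sF rF phi0 phi1" "f \<in> FE" "g \<in> FE" "rF f = rF g"
  shows "f = g"
proof -
  have "rF f \<in> FV"
    using assms(1,2) by (auto simp: ext_rep_graph_def dgraph_def)
  then show ?thesis
    using assms unfolding ext_rep_graph_def Let_def by metis
qed

lemma ext_rep_graph_out_edges:
  assumes ext: "ext_rep_graph E0 E1 s r sp FV FE sF rF phi0 phi1" and w: "w \<in> FV"
  shows "bij_betw phi1 {f \<in> FE. sF f = w}
           {d \<in> dedges E1. sd s r d = phi0 w \<and> (\<forall>f\<in>FE. rF f = w \<longrightarrow> normal_pair s sp (phi1 f) d)}"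
proof -
  define dout where "dout = {d \<in> dedges E1. sd s r d = phi0 w}"
  consider "\<forall>f\<in>FE. rF f \<noteq> w" "bij_betw phi1 {f \<in> FE. sF f = w} dout"
    | f where "f \<in> FE" "rF f = w" "\<forall>g\<in>FE. rF g = w \<longrightarrow> g = f"
      "case phi1 f of
         Re e \<Rightarrow> (if e = sp (s e) then bij_betw phi1 {f \<in> FE. sF f = w} (dout - {Gh e})
                  else bij_betw phi1 {f \<in> FE. sF f = w} dout)
       | Gh e \<Rightarrow> bij_betw phi1 {f \<in> FE. sF f = w} {d \<in> dout. is_ghost d}"
    using ext w unfolding ext_rep_graph_def Let_def dout_def by blast
  then show ?thesis
  proof cases
    case 1
    then show ?thesis by (simp add: dout_def)
  next
    case (2 f)
    have "bij_betw phi1 {f \<in> FE. sF f = w} {d \<in> dout. normal_pair s sp (phi1 f) d}"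
    proof (cases "phi1 f")
      case (Re e)
      have "dout - {Gh e} = {d \<in> dout. normal_pair s sp (Re e) d}" if "e = sp (s e)"
        using that by (auto simp: normal_pair_def)
      moreover have "dout = {d \<in> dout. normal_pair s sp (Re e) d}" if "e \<noteq> sp (s e)"
        using that by (auto simp: normal_pair_def)
      ultimately show ?thesis
        using 2(4) Re by (auto split: if_splits)
    next
      case (Gh e)
      then show ?thesis
        using 2(4) by (simp add: normal_pair_def)
    qed
    moreover have "{d \<in> dedges E1. sd s r d = phi0 w \<and> (\<forall>g\<in>FE. rF g = w \<longrightarrow> normal_pair s sp (phi1 g) d)}
        = {d \<in> dout. normal_pair s sp (phi1 f) d}"
      using 2(1-3) unfolding dout_def by blast
    ultimately show ?thesis
      by simp
  qed
qed

locale ext_rep_graph_with_source =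
  fixes E0 :: "'v set" and E1 :: "'e set" and s r :: "'e \<Rightarrow> 'v" and sp :: "'v \<Rightarrow> 'e"
    and FV :: "'w set" and FE :: "'f set" and sF rF :: "'f \<Rightarrow> 'w"
    and phi0 :: "'w \<Rightarrow> 'v" and phi1 :: "'f \<Rightarrow> 'e dedge" and w0 :: 'w
  assumes ext_rep_graph: "ext_rep_graph E0 E1 s r sp FV FE sF rF phi0 phi1"
    and connected: "connected_graph FV FE sF rF"
    and source_in_FV: "w0 \<in> FV"
    and source: "f \<in> FE \<Longrightarrow> rF f \<noteq> w0"
begin

abbreviation v0 :: 'v where
  "v0 \<equiv> phi0 w0"

lemma edge_ends_in_FV: "f \<in> FE \<Longrightarrow> sF f \<in> FV \<and> rF f \<in> FV"
  using ext_rep_graph by (auto simp: ext_rep_graph_def dgraph_def)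

lemma edge_hom:
  "f \<in> FE \<Longrightarrow> phi1 f \<in> dedges E1 \<and> phi0 (sF f) = sd s r (phi1 f) \<and> phi0 (rF f) = rd s r (phi1 f)"
  using ext_rep_graph by (auto simp: ext_rep_graph_def hom_to_double_def)

lemma source_in_E0: "v0 \<in> E0"
  using ext_rep_graph source_in_FV by (auto simp: ext_rep_graph_def hom_to_double_def)

inductive path_label :: "'e dedge list \<Rightarrow> 'w \<Rightarrow> bool" where
  Nil: "path_label [] w0"
| snoc: "path_label x u \<Longrightarrow> f \<in> FE \<Longrightarrow> sF f = u \<Longrightarrow> path_label (x @ [phi1 f]) (rF f)"

lemma path_label_Nil_iff: "path_label [] w \<longleftrightarrow> w = w0"
  by (auto elim: path_label.cases intro: path_label.Nil)

lemma path_label_snocE: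
  assumes "path_label (x @ [d]) w"
  obtains f where "f \<in> FE" "rF f = w" "phi1 f = d" "path_label x (sF f)"
  using assms by (cases rule: path_label.cases) auto

lemma path_label_to_source: "path_label x w0 \<Longrightarrow> x = []"
  by (cases x rule: rev_cases) (auto elim: path_label_snocE dest: source)

lemma path_label_vertex: "path_label x w \<Longrightarrow> w \<in> FV \<and> phi0 w = Fv_phi0 s r v0 x"
  by (induction rule: path_label.induct)
    (auto simp: source_in_FV Fv_phi0_def dest: edge_ends_in_FV edge_hom)

lemma path_label_out_edges:
  assumes "path_label x w"
  shows "bij_betw phi1 {f \<in> FE. sF f = w} (admissible_edges E1 s r sp v0 x)"
proof -
  have w: "w \<in> FV" "phi0 w = Fv_phi0 s r v0 x"
    using path_label_vertex[OF assms] by auto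
  have "(\<forall>f\<in>FE. rF f = w \<longrightarrow> normal_pair s sp (phi1 f) d) \<longleftrightarrow>
      (x \<noteq> [] \<longrightarrow> normal_pair s sp (last x) d)" for d
  proof (cases x rule: rev_cases)
    case Nil
    then show ?thesis
      using assms source by (auto simp: path_label_Nil_iff)
  next
    case (snoc y e)
    then obtain f where "f \<in> FE" "rF f = w" "phi1 f = e"
      using assms by (auto elim: path_label_snocE)
    then show ?thesis
      using snoc ext_rep_graph_in_edge_unique[OF ext_rep_graph] by auto
  qed
  then show ?thesis
    using ext_rep_graph_out_edges[OF ext_rep_graph w(1)] w(2)
    by (simp add: admissible_edges_def)
qed

lemma path_label_in_Xv: "path_label x w \<Longrightarrow> x \<in> Xv E1 s r sp v0"
proof (induction rule: path_label.induct)
  case Nil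
  then show ?case by (simp add: Xv_def)
next
  case (snoc x u f)
  have "phi1 f \<in> admissible_edges E1 s r sp v0 x"
    using bij_betwE[OF path_label_out_edges[OF snoc.hyps(1)]] snoc.hyps(2,3) by blast
  then show ?case
    using snoc.IH by (simp add: Xv_snoc_iff)
qed

lemma path_label_unique_vertex: "path_label x w \<Longrightarrow> path_label x w' \<Longrightarrow> w = w'"
proof (induction arbitrary: w' rule: path_label.induct)
  case Nil
  then show ?case by (simp add: path_label_Nil_iff)
next
  case (snoc x u f)
  obtain g where g: "g \<in> FE" "rF g = w'" "phi1 g = phi1 f" "path_label x (sF g)"
    using snoc.prems by (blast elim: path_label_snocE)
  have "sF g = u"
    using snoc.IH[OF g(4)] by simp
  have "inj_on phi1 {h \<in> FE. sF h = u}"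
    using path_label_out_edges[OF snoc.hyps(1)] by (rule bij_betw_imp_inj_on)
  then have "g = f"
    by (rule inj_onD) (use g \<open>sF g = u\<close> snoc.hyps in simp_all)
  then show ?case
    using g by simp
qed

lemma path_label_unique_label: "path_label x w \<Longrightarrow> path_label y w \<Longrightarrow> x = y"
proof (induction arbitrary: y rule: path_label.induct)
  case Nil
  then show ?case by (auto dest: path_label_to_source)
next
  case (snoc x u f)
  have "y \<noteq> []"
    using snoc.prems snoc.hyps(2) source by (auto simp: path_label_Nil_iff)
  then obtain y' d where y: "y = y' @ [d]"
    by (cases y rule: rev_cases) auto
  then obtain g where g: "g \<in> FE" "rF g = rF f" "phi1 g = d" "path_label y' (sF g)"
    using snoc.prems by (blast elim: path_label_snocE)
  have "g = f"
    using ext_rep_graph_in_edge_unique[OF ext_rep_graph g(1) snoc.hyps(2) g(2)] .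
  then show ?case
    using snoc.IH[of y'] g y snoc.hyps(3) by simp
qed

lemma path_label_exists_vertex: "x \<in> Xv E1 s r sp v0 \<Longrightarrow> \<exists>w. path_label x w"
proof (induction x rule: rev_induct)
  case Nil
  then show ?case by (blast intro: path_label.Nil)
next
  case (snoc d x)
  have x: "x \<in> Xv E1 s r sp v0" and d: "d \<in> admissible_edges E1 s r sp v0 x"
    using snoc.prems by (simp_all add: Xv_snoc_iff)
  obtain u where u: "path_label x u"
    using snoc.IH[OF x] by blast
  have "d \<in> phi1 ` {f \<in> FE. sF f = u}"
    using path_label_out_edges[OF u] d by (simp add: bij_betw_def)
  then obtain f where "f \<in> FE" "sF f = u" "phi1 f = d"
    by blast
  then have "path_label (x @ [d]) (rF f)"
    using path_label.snoc[OF u] by blast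
  then show ?case ..
qed

lemma path_label_exists_label:
  assumes "w \<in> FV"
  shows "\<exists>x. path_label x w"
proof -
  let ?adj = "{(sF f, rF f) | f. f \<in> FE}"
  have "(w0, w) \<in> (?adj \<union> ?adj\<inverse>)\<^sup>*"
    using connected source_in_FV assms unfolding connected_graph_def Let_def by blast
  then show ?thesis
  proof (induction rule: rtrancl_induct)
    case base
    then show ?case by (blast intro: path_label.Nil)
  next
    case (step b c)
    then obtain x where x: "path_label x b" by blast
    from step.hyps(2) show ?case
    proof
      assume "(b, c) \<in> ?adj"
      then show ?case
        using path_label.snoc[OF x] by blast
    next
      assume "(b, c) \<in> ?adj\<inverse>"
      then obtain f where f: "f \<in> FE" "sF f = c" "rF f = b" by blast
      then have "x \<noteq> []"
        using x source by (auto simp: path_label_Nil_iff)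
      then obtain y g where "g \<in> FE" "rF g = b" "path_label y (sF g)"
        using x by (cases x rule: rev_cases) (auto elim: path_label_snocE)
      then show ?case
        using f ext_rep_graph_in_edge_unique[OF ext_rep_graph] by metis
    qed
  qed
qed

definition label :: "'w \<Rightarrow> 'e dedge list" where
  "label w = (THE x. path_label x w)"

lemma label_eq: "path_label x w \<Longrightarrow> label w = x"
  unfolding label_def using path_label_unique_label by blast

lemma path_label_label: "w \<in> FV \<Longrightarrow> path_label (label w) w"
  using path_label_exists_label label_eq by metis

lemma label_edge: "f \<in> FE \<Longrightarrow> label (rF f) = label (sF f) @ [phi1 f]"
  using path_label.snoc path_label_label edge_ends_in_FV label_eq by metis

lemma rep_iso_label:
  "rep_iso FV FE sF rF phi0 phi1
     (Fv_V E1 s r sp v0) (Fv_E E1 s r sp v0) Fv_src Fv_rng (Fv_phi0 s r v0) Fv_phi1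
     label (\<lambda>f. label (rF f))"
proof -
  have bij0: "bij_betw label FV (Xv E1 s r sp v0)"
  proof (rule bij_betw_imageI)
    show "inj_on label FV"
      by (rule inj_onI) (metis path_label_label path_label_unique_vertex)
    show "label ` FV = Xv E1 s r sp v0"
      using path_label_label path_label_in_Xv path_label_exists_vertex path_label_vertex label_eq
      by blast
  qed
  have bij1: "bij_betw (\<lambda>f. label (rF f)) FE (Xv E1 s r sp v0 - {[]})"
  proof (rule bij_betw_imageI)
    show "inj_on (\<lambda>f. label (rF f)) FE"
      using bij0 edge_ends_in_FV ext_rep_graph_in_edge_unique[OF ext_rep_graph]
      by (auto simp: inj_on_def bij_betw_def)
    show "(\<lambda>f. label (rF f)) ` FE = Xv E1 s r sp v0 - {[]}"
    proof
      show "(\<lambda>f. label (rF f)) ` FE \<subseteq> Xv E1 s r sp v0 - {[]}"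
        using label_edge path_label_label path_label_in_Xv edge_ends_in_FV by fastforce
      show "Xv E1 s r sp v0 - {[]} \<subseteq> (\<lambda>f. label (rF f)) ` FE"
      proof
        fix x
        assume x: "x \<in> Xv E1 s r sp v0 - {[]}"
        then obtain w where w: "path_label x w"
          using path_label_exists_vertex by blast
        obtain f where "f \<in> FE" "rF f = w"
          using x w by (cases x rule: rev_cases) (auto elim: path_label_snocE)
        then show "x \<in> (\<lambda>f. label (rF f)) ` FE"
          using label_eq w by blast
      qed
    qed
  qed
  have "Fv_phi0 s r v0 (label w) = phi0 w" if "w \<in> FV" for w
    using path_label_vertex[OF path_label_label[OF that]] by simp
  then show ?thesis
    unfolding rep_iso_def Fv_V_def Fv_E_def Fv_src_def Fv_rng_def Fv_phi1_def
    using bij0 bij1 label_edge edge_ends_in_FV by auto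
qed

end

theorem proposition5p6:
  fixes E0 :: "'v set" and E1 :: "'e set" and s r :: "'e \<Rightarrow> 'v" and sp :: "'v \<Rightarrow> 'e"
    and FV :: "'w set" and FE :: "'f set" and sF rF :: "'f \<Rightarrow> 'w"
    and phi0 :: "'w \<Rightarrow> 'v" and phi1 :: "'f \<Rightarrow> 'e dedge"
  assumes "dgraph E0 E1 s r"
    and "row_finite E0 E1 s"
    and "special_choice E0 E1 s sp"
    and "ext_rep_graph E0 E1 s r sp FV FE sF rF phi0 phi1"
    and "connected_graph FV FE sF rF"
    and "has_source FV FE rF"
  shows "\<exists>v\<in>E0. \<exists>a0 a1. rep_iso FV FE sF rF phi0 phi1
           (Fv_V E1 s r sp v) (Fv_E E1 s r sp v) Fv_src Fv_rng (Fv_phi0 s r v) Fv_phi1 a0 a1"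
proof -
  obtain w0 where "w0 \<in> FV" "\<forall>f\<in>FE. rF f \<noteq> w0"
    using assms(6) unfolding has_source_def by blast
  then interpret ext_rep_graph_with_source E0 E1 s r sp FV FE sF rF phi0 phi1 w0
    using assms(4,5) by unfold_locales auto
  show ?thesis
    using source_in_E0 rep_iso_label by blast
qed

end
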